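(* For every even $n\ge2$, every integer $r\ge0$, every $p\in(0,1)$ and every graph $G$ of order $n$, $$\mathcal A_r(G)\le (4n)^{3n/2-1}\,p^{\frac{r}{4n}}\,N^{-d(G)}.$$
   Context: Fix $p\in(0,1)$ and $N:=1/(1-p)$. Trees. A 2-rooted ternary tree of order $n$ is a finite plane tree $U$ with a root vertex of degree 2 and $n$ true vertices of degree 4; each edge is internal or a leaf (half-edge). Each true vertex $v$ has parent edge $e_1(v)$ (towards the root) and ordered children edges $e_2(v),e_3(v),e_4(v)$. One root edge has type $\alpha$, the other $\bar\alpha$; if $e_1(v)$ has type $\tau$ then $e_2(v)$ has the other type and $e_3(v),e_4(v)$ have type $\tau$. Leaves of type $\alpha$ are leaves, of type $\bar\alpha$ anti-leaves ($n+1$ each). A heap-ordering labels true vertices bijectively by $\{1,\dots,n\}$, increasing from parent to child. Graphs. For even $n$, a graph of order $n$ is $G=(U,w,w')$: $U$ heap-ordered; $w$ a bijection leaves $\to$ anti-leaves (dashed edges; internal edges are solid); $w'$ a partition of true vertices into $n/2$ pairs (wavy edges) with, for each pair $\{v,v'\}$ ($v$ of smaller label), one of eight propagators in $(S,j,k)=(S_v,j_v,k_v)$, $(S',j',k')=(S_{v'},j_{v'},k_{v'})$: $\delta_{jj'}\delta_{kk'}$, $\delta_{j,S-j'}\delta_{kk'}$, $\delta_{jj'}\delta_{k,S-k'}$, $\delta_{j,S-j'}\delta_{k,S-k'}$, $\delta_{jk'}\delta_{kj'}$, $\delta_{j,S-k'}\delta_{kj'}$, $\delta_{jk'}\delta_{k,S-j'}$,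 $\delta_{j,S-k'}\delta_{k,S-j'}$, together with $S=S'$. Amplitude. A momentum attribution gives each true vertex $S_v\ge0$, $0\le j_v,k_v\le S_v$ and momenta $j_v,S_v-j_v,k_v,S_v-k_v$ to the ends at $v$ of $e_1,\dots,e_4$. For $r\in\mathbb N$ it is admissible if solid edges get equal momenta at both ends, both root edges carry momentum $r$, every dashed edge $e$ joins leaves of equal momentum $m(e)$, and every wavy edge satisfies $S_v=S_{v'}$ and its propagator. $\mathcal A_r(G):=N^{-n}\sum_{\text{admissible}}\prod_{e\text{ dashed}}p^{m(e)}$. Faces and degree. Call the edge-ends at true vertices and at the root slots. Each propagator of a wavy edge $\{v,v'\}$, with $S=S'$, identifies each of $j,S-j,k,S-k$ of $v$ with one momentum of $v'$, hence pairs each slot of $v$ with a slot of $v'$; these four pairs are the corners of that wavy edge. Let $\Gamma$ be the graph on the slots whose edges are the solid and dashed edges of $G$, the corners, and one extra edge joining the two root slots; its connected components (cycles) are the faces, $F(G)$ their number. Let $E$ be the $(n/2)\times F(G)$ matrix with rows indexed by wavy edges $\omega=\{v,v'\}$ ($v$ of smaller label), columns by faces, $E_{\omega f}$ = (number of corners of $\omega$ in $f$ containing $e_1(v)$ or $e_2(v)$) minus (number of corners of $\omega$ in $f$ containing $e_3(v)$ or $e_4(v)$). $R(G)=\operatorname{rank}E$, and $d(G):=n-F(G)+R(G)+1$. *)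

theory Defs
  imports "HOL-Analysis.Infinite_Sum" "HOL-Library.Extended_Nonnegative_Real"
          "Jordan_Normal_Form.DL_Rank"
begin

text \<open>TA is the type alpha, TB the type alpha-bar.\<close>
datatype ty = TA | TB

fun flip :: "ty \<Rightarrow> ty" where
  "flip TA = TB" | "flip TB = TA"

text \<open>Slots = edge-ends at the root (one per type of root edge) and at true
  vertices: VS v i is the end at vertex v of the edge e_i(v), i in 1..4.\<close>
datatype slot = RootS ty | VS nat nat

text \<open>Where a true vertex is attached: to the root edge of type tau, or as the
  child edge e_c(u) of the vertex u (c in 2..4).\<close>
datatype pos = AtRoot ty | AtChild nat nat

text \<open>A graph: heap-ordered tree (true vertices are identified with their labels
  1..n, given by the attachment map parent), the dashed edges (map leaves to
  anti-leaves), and the wavy edges (fixed-point-free involution mate on the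
  vertices; propg v in 0..7 is the propagator of the wavy edge whose smaller
  endpoint is v).\<close>
record graph =
  parent :: "nat \<Rightarrow> pos"
  dashed :: "slot \<Rightarrow> slot"
  mate :: "nat \<Rightarrow> nat"
  propg :: "nat \<Rightarrow> nat"

definition verts :: "nat \<Rightarrow> nat set" where
  "verts n = {1..n}"

definition pslot :: "graph \<Rightarrow> nat \<Rightarrow> slot" where
  "pslot G v = (case parent G v of AtRoot \<tau> \<Rightarrow> RootS \<tau> | AtChild u c \<Rightarrow> VS u c)"

text \<open>Type of the parent edge e_1(v).\<close>
function vtype :: "(nat \<Rightarrow> pos) \<Rightarrow> nat \<Rightarrow> ty" where
  "vtype par v = (case par v of AtRoot \<tau> \<Rightarrow> \<tau>
     | AtChild u c \<Rightarrow> (if u < v then (if c = 2 then flip (vtype par u) else vtype par u) else TA))"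
  by pat_completeness auto
termination by (relation "measure (\<lambda>(par, v). v)") auto

definition slot_type :: "graph \<Rightarrow> slot \<Rightarrow> ty" where
  "slot_type G s = (case s of RootS \<tau> \<Rightarrow> \<tau>
     | VS v i \<Rightarrow> (if i = 2 then flip (vtype (parent G) v) else vtype (parent G) v))"

definition all_slots :: "nat \<Rightarrow> slot set" where
  "all_slots n = range RootS \<union> {VS v i | v i. v \<in> verts n \<and> i \<in> {1..4}}"

definition child_slots :: "nat \<Rightarrow> slot set" where
  "child_slots n = range RootS \<union> {VS v c | v c. v \<in> verts n \<and> c \<in> {2..4}}"

definition leaf_slots :: "nat \<Rightarrow> graph \<Rightarrow> slot set" where
  "leaf_slots n G = child_slots n - pslot G ` verts n"

definition leaves :: "nat \<Rightarrow> graph \<Rightarrow> slot set" where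
  "leaves n G = {s \<in> leaf_slots n G. slot_type G s = TA}"

definition antileaves :: "nat \<Rightarrow> graph \<Rightarrow> slot set" where
  "antileaves n G = {s \<in> leaf_slots n G. slot_type G s = TB}"

definition is_heap_tree :: "nat \<Rightarrow> graph \<Rightarrow> bool" where
  "is_heap_tree n G \<longleftrightarrow>
     (\<forall>v\<in>verts n. case parent G v of AtRoot \<tau> \<Rightarrow> True
                   | AtChild u c \<Rightarrow> u \<in> verts n \<and> u < v \<and> c \<in> {2..4})
     \<and> inj_on (pslot G) (verts n)"

definition wavy :: "nat \<Rightarrow> graph \<Rightarrow> nat set" where
  "wavy n G = {v \<in> verts n. v < mate G v}"

definition is_graph :: "nat \<Rightarrow> graph \<Rightarrow> bool" where
  "is_graph n G \<longleftrightarrow> is_heap_tree n G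
     \<and> bij_betw (dashed G) (leaves n G) (antileaves n G)
     \<and> (\<forall>v\<in>verts n. mate G v \<in> verts n \<and> mate G v \<noteq> v \<and> mate G (mate G v) = v)
     \<and> (\<forall>v\<in>wavy n G. propg G v < 8)"

definition propagator :: "nat \<Rightarrow> nat \<Rightarrow> nat \<Rightarrow> nat \<Rightarrow> nat \<Rightarrow> nat \<Rightarrow> nat \<Rightarrow> bool" where
  "propagator t S j k S' j' k' \<longleftrightarrow>
     (if t = 0 then j = j' \<and> k = k'
      else if t = 1 then j = S - j' \<and> k = k'
      else if t = 2 then j = j' \<and> k = S - k'
      else if t = 3 then j = S - j' \<and> k = S - k'
      else if t = 4 then j = k' \<and> k = j'
      else if t = 5 then j = S - k' \<and> k = j'
      else if t = 6 then j = k' \<and> k = S - j'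
      else if t = 7 then j = S - k' \<and> k = S - j'
      else False)"

type_synonym attribution = "(nat \<Rightarrow> nat) \<times> (nat \<Rightarrow> nat) \<times> (nat \<Rightarrow> nat)"

fun mom :: "nat \<Rightarrow> attribution \<Rightarrow> slot \<Rightarrow> nat" where
  "mom r a (RootS \<tau>) = r"
| "mom r (S, j, k) (VS v i) =
     (if i = 1 then j v else if i = 2 then S v - j v else if i = 3 then k v else S v - k v)"

definition admissible :: "nat \<Rightarrow> nat \<Rightarrow> graph \<Rightarrow> attribution \<Rightarrow> bool" where
  "admissible n r G a \<longleftrightarrow> (case a of (S, j, k) \<Rightarrow>
     (\<forall>v. v \<notin> verts n \<longrightarrow> S v = 0 \<and> j v = 0 \<and> k v = 0)
     \<and> (\<forall>v\<in>verts n. j v \<le> S v \<and> k v \<le> S v)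
     \<and> (\<forall>v\<in>verts n. mom r a (VS v 1) = mom r a (pslot G v))
     \<and> (\<forall>s\<in>leaves n G. mom r a (dashed G s) = mom r a s)
     \<and> (\<forall>v\<in>wavy n G. S v = S (mate G v) \<and>
          propagator (propg G v) (S v) (j v) (k v) (S (mate G v)) (j (mate G v)) (k (mate G v))))"

definition Nc :: "real \<Rightarrow> real" where
  "Nc p = 1 / (1 - p)"

definition amp :: "real \<Rightarrow> nat \<Rightarrow> nat \<Rightarrow> graph \<Rightarrow> ennreal" where
  "amp p n r G = ennreal (inverse (Nc p ^ n)) *
     (\<Sum>\<^sub>\<infinity>a\<in>{a. admissible n r G a}. \<Prod>s\<in>leaves n G. ennreal (p ^ mom r a s))"

text \<open>Corner table: the slot index of v' paired with slot index i of v by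
  propagator t (slot 1,2,3,4 carry j, S-j, k, S-k).\<close>
definition cp :: "nat \<Rightarrow> nat \<Rightarrow> nat" where
  "cp t i = [[1,2,3,4],[2,1,3,4],[1,2,4,3],[2,1,4,3],
             [3,4,1,2],[4,3,1,2],[3,4,2,1],[4,3,2,1]] ! t ! (i - 1)"

definition gam :: "nat \<Rightarrow> graph \<Rightarrow> (slot \<times> slot) set" where
  "gam n G = {(VS v 1, pslot G v) | v. v \<in> verts n}
     \<union> {(s, dashed G s) | s. s \<in> leaves n G}
     \<union> {(VS v i, VS (mate G v) (cp (propg G v) i)) | v i. v \<in> wavy n G \<and> i \<in> {1..4}}
     \<union> {(RootS TA, RootS TB)}"

definition faces :: "nat \<Rightarrow> graph \<Rightarrow> slot set set" where
  "faces n G = all_slots n // ((gam n G \<union> (gam n G)\<inverse>)\<^sup>*)"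

definition Eent :: "graph \<Rightarrow> nat \<Rightarrow> slot set \<Rightarrow> real" where
  "Eent G v f = (\<Sum>i\<in>{1..4::nat}. if VS v i \<in> f then (if i \<le> 2 then 1 else -1) else 0)"

definition Emat :: "nat \<Rightarrow> graph \<Rightarrow> real mat" where
  "Emat n G = (let rl = sorted_list_of_set (wavy n G);
                   fl = (SOME fl. distinct fl \<and> set fl = faces n G)
               in mat (length rl) (length fl) (\<lambda>(a, b). Eent G (rl ! a) (fl ! b)))"

definition Rk :: "nat \<Rightarrow> graph \<Rightarrow> nat" where
  "Rk n G = vec_space.rank (dim_row (Emat n G)) (Emat n G)"

definition deg :: "nat \<Rightarrow> graph \<Rightarrow> int" where
  "deg n G = int n - int (card (faces n G)) + int (Rk n G) + 1"

end

theory Submission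
  imports Defs
begin

text \<open>
  Momentum is constant along every face, so an admissible attribution \<open>a\<close> yields a face
  momentum vector \<open>x(a)\<close>; it lies in the kernel of \<open>E\<close>, because the row of a wavy edge
  \<open>{v, v'}\<close> adds the momenta \<open>j, S - j\<close> of \<open>v\<close> and subtracts \<open>k, S - k\<close>. As the rows of \<open>E\<close>
  sum to zero, the root face column lies in the span of the others, so \<open>a\<close> is already
  determined by its momenta on a set \<open>J\<close> of \<open>F - R - 1\<close> faces besides the root face,
  which carries \<open>r\<close>. Every face momentum is at most the total leaf momentum \<open>W(a) \<ge> r\<close>,
  whence \<open>p^W(a) \<le> p^(r/4n) \<Prod>\<^sub>J q^x\<^sub>f\<close> with \<open>q = p^(1/4n)\<close>, and summing one geometric
  series per face of \<open>J\<close> costs a factor \<open>1/(1 - q) \<le> 4nN\<close> each. Finally every face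
  contains one of the \<open>2n\<close> slots at smaller endpoints of wavy edges, and the faces
  containing exactly one of them give a diagonal minor of \<open>E\<close>; this yields
  \<open>2F \<le> 3n + 2R\<close>, i.e. \<open>|J| \<le> 3n/2 - 1\<close>, while \<open>N^(-n) N^|J| = N^(-d(G))\<close>.
\<close>

section \<open>Matrix rank\<close>

context vec_space
begin

lemma card_le_rank_if_diagonal_minor:
  fixes E :: "'a mat"
  assumes E: "E \<in> carrier_mat n nc"
    and col: "\<And>x. x \<in> I \<Longrightarrow> c x < nc" and row: "\<And>x. x \<in> I \<Longrightarrow> ro x < n"
    and diag: "\<And>x. x \<in> I \<Longrightarrow> E $$ (ro x, c x) \<noteq> 0"
    and off_diag: "\<And>x y. x \<in> I \<Longrightarrow> y \<in> I \<Longrightarrow> x \<noteq> y \<Longrightarrow> E $$ (ro x, c y) = 0"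
  shows "card I \<le> rank E"
proof -
  have col_idx: "col E (c y) $ ro x = E $$ (ro x, c y)" if "x \<in> I" "y \<in> I" for x y
    using E col row that by simp
  have inj: "inj_on (\<lambda>x. col E (c x)) I"
  proof (rule inj_onI)
    fix x y assume xy: "x \<in> I" "y \<in> I" "col E (c x) = col E (c y)"
    show "x = y"
      using col_idx[of x x] col_idx[of x y] xy diag off_diag by metis
  qed
  let ?U = "(\<lambda>x. col E (c x)) ` I"
  have U: "?U \<subseteq> carrier_vec n" using E col by auto
  have indpt: "\<not> lin_dep ?U"
  proof
    assume "lin_dep ?U"
    then obtain A a v where A: "finite A" "A \<subseteq> ?U" "lincomb a A = 0\<^sub>v n" "v \<in> A" "a v \<noteq> 0"
      unfolding lin_dep_def by auto
    obtain x where x: "x \<in> I" "v = col E (c x)" using A by auto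
    have "0 = lincomb a A $ ro x" using A row x by simp
    also have "\<dots> = (\<Sum>w\<in>A. a w * w $ ro x)"
      by (rule lincomb_index[OF row[OF x(1)]]) (use A U in auto)
    also have "\<dots> = a v * v $ ro x + (\<Sum>w\<in>A - {v}. a w * w $ ro x)"
      by (rule sum.remove[OF A(1) A(4)])
    also have "(\<Sum>w\<in>A - {v}. a w * w $ ro x) = 0"
    proof (rule sum.neutral, rule ballI)
      fix w assume w: "w \<in> A - {v}"
      then obtain y where y: "y \<in> I" "w = col E (c y)" using A by auto
      with w x have "x \<noteq> y" by auto
      thus "a w * w $ ro x = 0" using off_diag x y col_idx by simp
    qed
    finally show False using A(5) diag[OF x(1)] col_idx[OF x(1) x(1)] x by simp
  qed
  have "card ?U \<le> rank E"
    by (rule rank_ge_card_indpt[OF E _ indpt]) (use E col in \<open>auto simp: cols_def\<close>)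
  thus ?thesis using card_image[OF inj] by simp
qed

lemma col_in_span_other_cols:
  fixes E :: "'a mat"
  assumes E: "E \<in> carrier_mat n nc" and b0: "b0 < nc"
    and row_sums: "\<And>i. i < n \<Longrightarrow> (\<Sum>b<nc. E $$ (i, b)) = 0"
  shows "col E b0 \<in> span (col E ` ({..<nc} - {b0}))"
proof -
  let ?B = "{..<nc} - {b0}"
  let ?S = "col E ` ?B"
  \<comment> \<open>\<open>col E b0\<close> is minus the sum of the other columns, counted with multiplicity\<close>
  define a where "a v = (- of_nat (card {b \<in> ?B. col E b = v}) :: 'a)" for v
  have S: "?S \<subseteq> carrier_vec n" using E by auto
  have "lincomb a ?S = col E b0"
  proof (rule eq_vecI)
    fix i assume "i < dim_vec (col E b0)"
    hence i: "i < n" using E by auto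
    have fibre: "(\<Sum>b\<in>{b \<in> ?B. col E b = v}. E $$ (i, b)) = - (a v * v $ i)" if "v \<in> ?S" for v
    proof -
      have "(\<Sum>b\<in>{b \<in> ?B. col E b = v}. E $$ (i, b)) = (\<Sum>b\<in>{b \<in> ?B. col E b = v}. v $ i)"
        using E i by (intro sum.cong) auto
      thus ?thesis by (simp add: a_def)
    qed
    have "lincomb a ?S $ i = (\<Sum>v\<in>?S. a v * v $ i)" by (rule lincomb_index[OF i S])
    also have "\<dots> = - (\<Sum>v\<in>?S. \<Sum>b\<in>{b \<in> ?B. col E b = v}. E $$ (i, b))"
      using fibre by (simp add: sum_negf)
    also have "(\<Sum>v\<in>?S. \<Sum>b\<in>{b \<in> ?B. col E b = v}. E $$ (i, b)) = (\<Sum>b\<in>?B. E $$ (i, b))"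
      by (rule sum.image_gen[symmetric]) auto
    also have "\<dots> = (\<Sum>b<nc. E $$ (i, b)) - E $$ (i, b0)"
      using b0 by (simp add: sum_diff1)
    finally show "lincomb a ?S $ i = col E b0 $ i" using row_sums[OF i] E i b0 by simp
  qed (use E S in simp)
  thus ?thesis unfolding span_def by (intro CollectI exI[of _ a] exI[of _ ?S]) auto
qed

lemma span_other_cols_eq:
  fixes E :: "'a mat"
  assumes E: "E \<in> carrier_mat n nc" and b0: "b0 < nc"
    and row_sums: "\<And>i. i < n \<Longrightarrow> (\<Sum>b<nc. E $$ (i, b)) = 0"
  shows "span (col E ` ({..<nc} - {b0})) = span (set (cols E))"
proof
  let ?S = "col E ` ({..<nc} - {b0})"
  have S: "?S \<subseteq> carrier_vec n" using E by auto
  have cols: "set (cols E) = col E ` {..<nc}" using E by (auto simp: cols_def)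
  have "set (cols E) \<subseteq> span ?S"
  proof
    fix v assume "v \<in> set (cols E)"
    then obtain b where b: "b < nc" "v = col E b" using cols by auto
    show "v \<in> span ?S"
    proof (cases "b = b0")
      case True
      thus ?thesis using col_in_span_other_cols[OF E b0 row_sums] b by simp
    next
      case False
      thus ?thesis using in_own_span[OF S] b by auto
    qed
  qed
  thus "span (set (cols E)) \<subseteq> span ?S"
    by (rule span_is_subset) (rule span_is_submodule[OF S])
  show "span ?S \<subseteq> span (set (cols E))" by (rule span_is_monotone) (auto simp: cols)
qed

lemma eq_zero_if_supported_on_indpt_cols:
  fixes E :: "'a mat"
  assumes E: "E \<in> carrier_mat n nc" and K: "K \<subseteq> {..<nc}"
    and inj: "inj_on (col E) K" and indpt: "\<not> lin_dep (col E ` K)"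
    and y: "y \<in> carrier_vec nc" "E *\<^sub>v y = 0\<^sub>v n"
    and supp: "\<And>b. b < nc \<Longrightarrow> b \<notin> K \<Longrightarrow> y $ b = 0"
  shows "y = 0\<^sub>v nc"
proof -
  let ?U = "col E ` K"
  let ?a = "\<lambda>u. y $ inv_into K (col E) u"
  have U: "?U \<subseteq> carrier_vec n" using E K by auto
  have finK: "finite K" using K finite_subset by blast
  have "lincomb ?a ?U = 0\<^sub>v n"
  proof (rule eq_vecI)
    fix i assume "i < dim_vec (0\<^sub>v n :: 'a vec)"
    hence i: "i < n" by simp
    have "lincomb ?a ?U $ i = (\<Sum>u\<in>?U. ?a u * u $ i)" by (rule lincomb_index[OF i U])
    also have "\<dots> = (\<Sum>b\<in>K. y $ b * E $$ (i, b))"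
      using E K i by (subst sum.reindex[OF inj]) (auto intro!: sum.cong simp: inv_into_f_f[OF inj])
    also have "\<dots> = (\<Sum>b\<in>{..<nc}. y $ b * E $$ (i, b))"
      using K supp by (intro sum.mono_neutral_left) auto
    also have "\<dots> = (E *\<^sub>v y) $ i"
      using E i y(1) by (auto simp: scalar_prod_def mult.commute intro!: sum.cong)
    finally show "lincomb ?a ?U $ i = 0\<^sub>v n $ i" using y(2) i by simp
  qed (use U in simp)
  hence coeff: "?a u = 0" if "u \<in> ?U" for u
    using lin_dep_crit[OF finite_imageI[OF finK] subset_refl _ that, of ?a] indpt by auto
  show ?thesis
  proof (rule eq_vecI)
    fix b assume "b < dim_vec (0\<^sub>v nc :: 'a vec)"
    hence b: "b < nc" by simp
    show "y $ b = 0\<^sub>v nc $ b"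
      using coeff[of "col E b"] supp[OF b] b inv_into_f_f[OF inj] by (cases "b \<in> K") auto
  qed (use y in simp)
qed

lemma obtain_kernel_detecting_cols:
  fixes E :: "'a mat"
  assumes E: "E \<in> carrier_mat n nc" and B: "B \<subseteq> {..<nc}"
    and spans: "span (col E ` B) = span (set (cols E))"
  obtains K where "K \<subseteq> B" "card K = rank E"
    "\<And>y. y \<in> carrier_vec nc \<Longrightarrow> E *\<^sub>v y = 0\<^sub>v n \<Longrightarrow> (\<And>b. b < nc \<Longrightarrow> b \<notin> K \<Longrightarrow> y $ b = 0)
       \<Longrightarrow> y = 0\<^sub>v nc"
proof -
  let ?S = "col E ` B"
  have S: "?S \<subseteq> carrier_vec n" using E B by auto
  have finB: "finite B" using B finite_subset by blast
  obtain U where U: "maximal U (\<lambda>T. T \<subseteq> ?S \<and> \<not> lin_dep T)"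
    using maximal_exists_superset[of ?S "\<lambda>T. T \<subseteq> ?S \<and> \<not> lin_dep T" "{}"] finB
    by (auto simp: lin_dep_def)
  have US: "U \<subseteq> ?S" and indpt: "\<not> lin_dep U" using U unfolding maximal_def by auto
  have rank: "rank E = card U"
    unfolding rank_def spans[symmetric] using dim_span[OF S _ U] finB by simp
  define K where "K = inv_into B (col E) ` U"
  have KB: "K \<subseteq> B" unfolding K_def using US by (auto intro: inv_into_into)
  have UK: "col E ` K = U" unfolding K_def using US by (force simp: f_inv_into_f image_image)
  have inj: "inj_on (col E) K"
  proof (rule inj_onI)
    fix b b' assume "b \<in> K" "b' \<in> K" and eq: "col E b = col E b'"
    then obtain u u' where "u \<in> U" "u' \<in> U" "b = inv_into B (col E) u" "b' = inv_into B (col E) u'"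
      unfolding K_def by blast
    moreover from this US have "col E b = u" "col E b' = u'" by (auto intro: f_inv_into_f)
    ultimately show "b = b'" using eq by simp
  qed
  show ?thesis
  proof
    show "K \<subseteq> B" by (fact KB)
    show "card K = rank E" using card_image[OF inj] UK rank by simp
    show "y = 0\<^sub>v nc"
      if "y \<in> carrier_vec nc" "E *\<^sub>v y = 0\<^sub>v n" "\<And>b. b < nc \<Longrightarrow> b \<notin> K \<Longrightarrow> y $ b = 0" for y
      using eq_zero_if_supported_on_indpt_cols[OF E _ inj _ that] KB B UK indpt by auto
  qed
qed

lemma obtain_kernel_detecting_cols_avoiding:
  fixes E :: "'a mat"
  assumes E: "E \<in> carrier_mat n nc" and b0: "b0 < nc"
    and row_sums: "\<And>i. i < n \<Longrightarrow> (\<Sum>b<nc. E $$ (i, b)) = 0"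
  obtains K where "K \<subseteq> {..<nc} - {b0}" "card K = rank E"
    "\<And>y. y \<in> carrier_vec nc \<Longrightarrow> E *\<^sub>v y = 0\<^sub>v n \<Longrightarrow> (\<And>b. b < nc \<Longrightarrow> b \<notin> K \<Longrightarrow> y $ b = 0)
       \<Longrightarrow> y = 0\<^sub>v nc"
  using obtain_kernel_detecting_cols[OF E _ span_other_cols_eq[OF E b0 row_sums]] by blast

end

section \<open>Geometric bounds\<close>

lemma geometric_partial_sum_le:
  fixes q :: real
  assumes "0 \<le> q" "q < 1"
  shows "(\<Sum>t\<le>T. q ^ t) \<le> 1 / (1 - q)"
proof -
  have "(\<Sum>t\<le>T. q ^ t) = (\<Sum>t<Suc T. q ^ t)" by (simp add: lessThan_Suc_atMost)
  also have "\<dots> = (1 - q ^ Suc T) / (1 - q)" using assms by (simp only: sum_gp_strict) simp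
  also have "\<dots> \<le> 1 / (1 - q)" using assms by (intro divide_right_mono) auto
  finally show ?thesis .
qed

lemma powr_inverse_nat_bounds:
  fixes p :: real and c :: nat
  assumes p: "0 < p" "p < 1" and c: "1 \<le> c"
  shows "0 < p powr (1 / real c)" "p powr (1 / real c) < 1"
    and "1 / (1 - p powr (1 / real c)) \<le> real c / (1 - p)"
proof -
  define q where "q = p powr (1 / real c)"
  show q0: "0 < p powr (1 / real c)" using p by simp
  have qc: "q ^ c = p"
  proof -
    have "q ^ c = q powr real c" using q0 by (simp add: q_def powr_realpow)
    also have "\<dots> = p" using c p by (simp add: q_def powr_powr)
    finally show ?thesis .
  qed
  have q1: "q < 1"
  proof (rule ccontr)
    assume "\<not> q < 1"
    hence "1 \<le> q ^ c" by simp
    thus False using qc p by simp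
  qed
  thus "p powr (1 / real c) < 1" by (simp add: q_def)
  have "1 - p = (1 - q) * (\<Sum>i<c. q ^ i)" using qc one_diff_power_eq[of q c] by simp
  also have "\<dots> \<le> (1 - q) * real c"
  proof (rule mult_left_mono)
    have "(\<Sum>i<c. q ^ i) \<le> (\<Sum>i<c. (1::real))"
      by (rule sum_mono) (use q0 q1 in \<open>auto simp: q_def intro: power_le_one\<close>)
    thus "(\<Sum>i<c. q ^ i) \<le> real c" by simp
  qed (use q1 in simp)
  finally show "1 / (1 - p powr (1 / real c)) \<le> real c / (1 - p)"
    using p q1 by (simp add: q_def divide_simps mult.commute)
qed

lemma power_le_powr_mult_prod:
  fixes p :: real and x :: "'b \<Rightarrow> nat"
  assumes p: "0 < p" "p < 1" and J: "finite J" "card J + 1 \<le> c"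
    and r: "r \<le> W" and x: "\<And>b. b \<in> J \<Longrightarrow> x b \<le> W"
  shows "p ^ W \<le> p powr (real r / real c) * (\<Prod>b\<in>J. (p powr (1 / real c)) ^ x b)"
proof -
  have "r + (\<Sum>b\<in>J. x b) \<le> W + card J * W" using r sum_bounded_above[of J x W] x by simp
  also have "\<dots> \<le> c * W" using J(2) mult_right_mono[of "card J + 1" c W] by simp
  finally have "real (r + (\<Sum>b\<in>J. x b)) \<le> real c * real W" by (simp only: of_nat_mult[symmetric] of_nat_le_iff)
  hence le: "real (r + (\<Sum>b\<in>J. x b)) / real c \<le> real W"
    using J(2) by (simp add: divide_simps mult.commute)
  have "p ^ W = p powr real W" using p by (simp add: powr_realpow)
  also have "\<dots> \<le> p powr (real (r + (\<Sum>b\<in>J. x b)) / real c)" by (rule powr_mono'[OF le]) (use p in auto)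
  also have "\<dots> = p powr (real r / real c + (\<Sum>b\<in>J. real (x b) / real c))"
    by (simp add: add_divide_distrib sum_divide_distrib)
  also have "\<dots> = p powr (real r / real c) * (\<Prod>b\<in>J. p powr (real (x b) / real c))"
    using p by (simp add: powr_add powr_sum)
  also have "(\<Prod>b\<in>J. p powr (real (x b) / real c)) = (\<Prod>b\<in>J. (p powr (1 / real c)) ^ x b)"
    using p by (intro prod.cong) (simp_all add: powr_powr powr_realpow[symmetric])
  finally show ?thesis .
qed

text \<open>The infinite sum is bounded through its finite partial sums; a finite set of indices is
  mapped by \<open>\<psi>\<close> into a finite box, over which the product of geometric series factorises.\<close>

lemma infsum_le_geometric_if_inj:
  fixes q C :: real and f :: "'a \<Rightarrow> ennreal" and \<psi> :: "'a \<Rightarrow> 'b \<Rightarrow> nat"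
  assumes q: "0 \<le> q" "q < 1" and C: "0 \<le> C" and J: "finite J"
    and inj: "inj_on \<psi> A" and ext: "\<And>a. a \<in> A \<Longrightarrow> \<psi> a \<in> extensional J"
    and f: "\<And>a. a \<in> A \<Longrightarrow> f a \<le> ennreal (C * (\<Prod>b\<in>J. q ^ \<psi> a b))"
  shows "(\<Sum>\<^sub>\<infinity>a\<in>A. f a) \<le> ennreal (C * (1 / (1 - q)) ^ card J)"
proof (rule infsum_le_finite_sums)
  show "f summable_on A" by (rule nonneg_summable_on_complete) simp
  fix A0 assume A0: "finite A0" "A0 \<subseteq> A"
  define g where "g y = (\<Prod>b\<in>J. q ^ y b)" for y :: "'b \<Rightarrow> nat"
  define M where "M = (\<Sum>a\<in>A0. \<Sum>b\<in>J. \<psi> a b)"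
  have g0: "0 \<le> g y" for y unfolding g_def using q by (simp add: prod_nonneg)
  have box: "\<psi> ` A0 \<subseteq> PiE J (\<lambda>_. {..M})"
  proof
    fix y assume "y \<in> \<psi> ` A0"
    then obtain a where a: "a \<in> A0" "y = \<psi> a" by blast
    have "\<psi> a b \<le> M" if "b \<in> J" for b
    proof -
      have "\<psi> a b \<le> (\<Sum>b\<in>J. \<psi> a b)" using J that by (intro member_le_sum) auto
      also have "\<dots> \<le> M" unfolding M_def using A0(1) a(1) by (intro member_le_sum) auto
      finally show ?thesis .
    qed
    thus "y \<in> PiE J (\<lambda>_. {..M})" using ext a A0(2) by (auto simp: PiE_iff)
  qed
  have "(\<Sum>a\<in>A0. g (\<psi> a)) = (\<Sum>y\<in>\<psi> ` A0. g y)"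
    using sum.reindex[OF inj_on_subset[OF inj A0(2)], of g] by simp
  also have "\<dots> \<le> (\<Sum>y\<in>PiE J (\<lambda>_. {..M}). g y)"
    by (rule sum_mono2[OF _ box]) (use J g0 in \<open>auto simp: finite_PiE\<close>)
  also have "\<dots> = (\<Prod>b\<in>J. \<Sum>t\<le>M. q ^ t)"
    unfolding g_def by (rule prod_sum_PiE[symmetric]) (use J in auto)
  also have "\<dots> \<le> (\<Prod>b\<in>J. 1 / (1 - q))"
    by (rule prod_mono) (use q in \<open>auto intro: sum_nonneg geometric_partial_sum_le\<close>)
  finally have sum_g: "(\<Sum>a\<in>A0. g (\<psi> a)) \<le> (1 / (1 - q)) ^ card J" by simp
  have "sum f A0 \<le> (\<Sum>a\<in>A0. ennreal (C * g (\<psi> a)))"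
    using f A0(2) unfolding g_def by (intro sum_mono) auto
  also have "\<dots> = ennreal (C * (\<Sum>a\<in>A0. g (\<psi> a)))"
    using C g0 by (simp add: sum_ennreal sum_distrib_left)
  also have "\<dots> \<le> ennreal (C * (1 / (1 - q)) ^ card J)"
    using C sum_g by (intro ennreal_leI) (simp add: mult_left_mono)
  finally show "sum f A0 \<le> ennreal (C * (1 / (1 - q)) ^ card J)" .
qed

lemma inverse_Nc_power_mult_le:
  fixes p :: real and c D m n r :: nat
  assumes p: "0 < p" "p < 1" and c: "1 \<le> c" and D: "D \<le> m"
  shows "inverse (Nc p ^ n) * (p powr (real r / real c) * (1 / (1 - p powr (1 / real c))) ^ D)
    \<le> real c ^ m * p powr (real r / real c) * Nc p powr (real D - real n)"
proof -
  define N where "N = Nc p"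
  have N: "0 < N" "1 / (1 - p) = N" unfolding N_def Nc_def using p by auto
  have q: "0 < p powr (1 / real c)" "p powr (1 / real c) < 1"
    using powr_inverse_nat_bounds[OF p c] by auto
  have base: "1 / (1 - p powr (1 / real c)) \<le> real c * N"
    using powr_inverse_nat_bounds(3)[OF p c] by (simp add: N(2)[symmetric])
  have "(1 / (1 - p powr (1 / real c))) ^ D \<le> (real c * N) ^ D"
    by (rule power_mono[OF base]) (use q in simp)
  also have "\<dots> = real c ^ D * N ^ D" by (simp add: power_mult_distrib)
  also have "\<dots> \<le> real c ^ m * N ^ D"
    using c D N by (intro mult_right_mono power_increasing) auto
  finally have "inverse (N ^ n) * (p powr (real r / real c) * (1 / (1 - p powr (1 / real c))) ^ D)
      \<le> inverse (N ^ n) * (p powr (real r / real c) * (real c ^ m * N ^ D))"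
    using N by (intro mult_left_mono) auto
  also have "\<dots> = real c ^ m * p powr (real r / real c) * N powr (real D - real n)"
    using N by (simp add: powr_diff powr_realpow field_simps)
  finally show ?thesis unfolding N_def .
qed

section \<open>Corners and momenta at a vertex\<close>

lemma UNIV_ty: "(UNIV :: ty set) = {TA, TB}"
  using ty.exhaust by auto

lemma cp_in_range: "t < 8 \<Longrightarrow> i \<in> {1..4} \<Longrightarrow> cp t i \<in> {1..4}"
proof -
  assume "t < 8" "i \<in> {1..4}"
  hence "t \<in> {0, 1, 2, 3, 4, 5, 6, 7}" "i \<in> {1, 2, 3, 4}" by auto
  thus ?thesis by (auto simp: cp_def)
qed

lemma cp_surj: "t < 8 \<Longrightarrow> i \<in> {1..4} \<Longrightarrow> \<exists>i'\<in>{1..4}. cp t i' = i"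
proof -
  assume "t < 8" "i \<in> {1..4}"
  hence "t \<in> {0, 1, 2, 3, 4, 5, 6, 7}" "i \<in> {1, 2, 3, 4}" by auto
  hence "cp t 1 = i \<or> cp t 2 = i \<or> cp t 3 = i \<or> cp t 4 = i" by (auto simp: cp_def)
  thus ?thesis by force
qed

definition vertex_mom :: "nat \<Rightarrow> nat \<Rightarrow> nat \<Rightarrow> nat \<Rightarrow> nat" where
  "vertex_mom S j k i = (if i = 1 then j else if i = 2 then S - j else if i = 3 then k else S - k)"

lemma mom_VS: "mom r (S, j, k) (VS v i) = vertex_mom (S v) (j v) (k v) i"
  by (simp add: vertex_mom_def)

lemma vertex_mom_le: "j \<le> S \<Longrightarrow> k \<le> S \<Longrightarrow> vertex_mom S j k i \<le> S"
  by (simp add: vertex_mom_def)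

lemma vertex_mom_cp:
  assumes "t < 8" "i \<in> {1..4}" "propagator t S j k S j' k'"
    "j \<le> S" "k \<le> S" "j' \<le> S" "k' \<le> S"
  shows "vertex_mom S j k i = vertex_mom S j' k' (cp t i)"
proof -
  have "t = 0 \<or> t = 1 \<or> t = 2 \<or> t = 3 \<or> t = 4 \<or> t = 5 \<or> t = 6 \<or> t = 7"
    "i = 1 \<or> i = 2 \<or> i = 3 \<or> i = 4" using assms(1,2) by auto
  thus ?thesis using assms(3-) by (elim disjE; simp add: propagator_def cp_def vertex_mom_def)
qed

section \<open>Faces of a graph\<close>

locale graph_of_order =
  fixes n :: nat and G :: graph
  assumes is_graph: "is_graph n G" and two_le: "2 \<le> n"
begin

abbreviation slots :: "slot set" where "slots \<equiv> all_slots n"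

lemma heap_tree: "is_heap_tree n G"
  and dashed_bij: "bij_betw (dashed G) (leaves n G) (antileaves n G)"
  and mate: "\<And>v. v \<in> verts n \<Longrightarrow> mate G v \<in> verts n \<and> mate G v \<noteq> v \<and> mate G (mate G v) = v"
  and propg_less: "\<And>v. v \<in> wavy n G \<Longrightarrow> propg G v < 8"
  using is_graph unfolding is_graph_def by auto

lemma inj_pslot: "inj_on (pslot G) (verts n)"
  using heap_tree unfolding is_heap_tree_def by auto

lemma pslot_cases:
  assumes "v \<in> verts n"
  obtains \<tau> where "pslot G v = RootS \<tau>"
  | u c where "pslot G v = VS u c" "u \<in> verts n" "u < v" "c \<in> {2..4}"
  using heap_tree assms unfolding is_heap_tree_def pslot_def by (cases "parent G v") auto

lemma pslot_1: "\<exists>\<tau>. pslot G 1 = RootS \<tau>"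
proof -
  have "1 \<in> verts n" using two_le by (auto simp: verts_def)
  thus ?thesis by (rule pslot_cases) (auto simp: verts_def)
qed

lemma wavy_subset: "wavy n G \<subseteq> verts n"
  by (auto simp: wavy_def)

lemma finite_wavy: "finite (wavy n G)"
  using wavy_subset by (auto simp: verts_def intro: finite_subset)

lemma child_slots_subset: "child_slots n \<subseteq> slots"
  by (auto simp: child_slots_def all_slots_def)

lemma pslot_in_child_slots: "v \<in> verts n \<Longrightarrow> pslot G v \<in> child_slots n"
  by (erule pslot_cases) (auto simp: child_slots_def)

lemma leaves_subset: "leaves n G \<subseteq> child_slots n" "antileaves n G \<subseteq> child_slots n"
  by (auto simp: leaves_def antileaves_def leaf_slots_def)

lemma finite_slots: "finite slots"
proof -
  have "slots = range RootS \<union> (\<lambda>(v, i). VS v i) ` (verts n \<times> {1..4})"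
    by (auto simp: all_slots_def)
  thus ?thesis by (simp add: UNIV_ty verts_def)
qed

lemma gam_subset: "(x, y) \<in> gam n G \<Longrightarrow> x \<in> slots \<and> y \<in> slots"
  unfolding gam_def
proof (elim UnE)
  assume "(x, y) \<in> {(VS v 1, pslot G v) |v. v \<in> verts n}"
  thus ?thesis using pslot_in_child_slots child_slots_subset by (auto simp: all_slots_def)
next
  assume "(x, y) \<in> {(s, dashed G s) |s. s \<in> leaves n G}"
  thus ?thesis using leaves_subset child_slots_subset bij_betwE[OF dashed_bij] by blast
next
  assume "(x, y) \<in> {(VS v i, VS (mate G v) (cp (propg G v) i)) |v i. v \<in> wavy n G \<and> i \<in> {1..4}}"
  then obtain v i where "x = VS v i" "y = VS (mate G v) (cp (propg G v) i)" "v \<in> wavy n G" "i \<in> {1..4}"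
    by blast
  thus ?thesis using wavy_subset mate[of v] cp_in_range[OF propg_less] by (auto simp: all_slots_def)
qed (auto simp: all_slots_def)

text \<open>The reflexive-transitive closure is reflexive on all slots, not only on \<open>slots\<close>,
  hence the restriction.\<close>

definition face_rel :: "(slot \<times> slot) set" where
  "face_rel = (gam n G \<union> (gam n G)\<inverse>)\<^sup>* \<inter> slots \<times> slots"

lemma equiv_face_rel: "equiv slots face_rel"
proof -
  have "sym ((gam n G \<union> (gam n G)\<inverse>)\<^sup>*)" by (intro sym_rtrancl) (auto simp: sym_def)
  thus ?thesis unfolding equiv_def face_rel_def refl_on_def sym_def trans_def by auto
qed

lemma faces_eq_quotient: "faces n G = slots // face_rel"
proof -
  let ?R = "(gam n G \<union> (gam n G)\<inverse>)\<^sup>*"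
  have closed: "(x, y) \<in> ?R \<Longrightarrow> x \<in> slots \<Longrightarrow> y \<in> slots" for x y
    by (induction rule: rtrancl_induct) (use gam_subset in auto)
  have "face_rel `` {x} = ?R `` {x}" if "x \<in> slots" for x
    using closed that unfolding face_rel_def by auto
  thus ?thesis unfolding faces_def quotient_def by auto
qed

lemma finite_faces: "finite (faces n G)"
  unfolding faces_eq_quotient using finite_slots equiv_face_rel
  by (intro finite_quotient) (auto simp: equiv_def)

lemma face_subset: "f \<in> faces n G \<Longrightarrow> f \<subseteq> slots"
  using Union_quotient[OF equiv_face_rel] faces_eq_quotient by blast

lemma face_eq: "f \<in> faces n G \<Longrightarrow> s \<in> f \<Longrightarrow> f = face_rel `` {s}"
  unfolding faces_eq_quotient using equiv_face_rel
  by (metis Image_singleton_iff equiv_class_eq quotientE)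

lemma slot_in_face: "s \<in> slots \<Longrightarrow> \<exists>f\<in>faces n G. s \<in> f"
  unfolding faces_eq_quotient
  by (intro bexI[of _ "face_rel `` {s}"] quotientI) (auto simp: face_rel_def)

lemma face_unique: "f \<in> faces n G \<Longrightarrow> g \<in> faces n G \<Longrightarrow> s \<in> f \<Longrightarrow> s \<in> g \<Longrightarrow> f = g"
  using face_eq by metis

lemma face_nonempty: "f \<in> faces n G \<Longrightarrow> f \<noteq> {}"
  unfolding faces_eq_quotient by (metis equiv_class_self[OF equiv_face_rel] quotientE emptyE)

lemma gam_face_iff: "(x, y) \<in> gam n G \<Longrightarrow> f \<in> faces n G \<Longrightarrow> x \<in> f \<longleftrightarrow> y \<in> f"
proof -
  assume xy: "(x, y) \<in> gam n G" and f: "f \<in> faces n G"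
  have "(x, y) \<in> face_rel" "(y, x) \<in> face_rel"
    using xy gam_subset[OF xy] unfolding face_rel_def by auto
  thus ?thesis using face_eq[OF f] by blast
qed

lemma face_has_VS: "f \<in> faces n G \<Longrightarrow> \<exists>v i. v \<in> verts n \<and> i \<in> {1..4} \<and> VS v i \<in> f"
proof -
  assume f: "f \<in> faces n G"
  then obtain x where x: "x \<in> f" using face_nonempty by blast
  show ?thesis
  proof (cases x)
    case (VS v i)
    thus ?thesis using x face_subset[OF f] by (auto simp: all_slots_def)
  next
    case (RootS \<tau>)
    obtain \<tau>1 where \<tau>1: "pslot G 1 = RootS \<tau>1" using pslot_1 by auto
    have v1: "1 \<in> verts n" using two_le by (auto simp: verts_def)
    have "(RootS TA, RootS TB) \<in> gam n G" unfolding gam_def by blast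
    hence "RootS TA \<in> f \<and> RootS TB \<in> f"
      using RootS x gam_face_iff[OF _ f] by (cases \<tau>) auto
    hence "RootS \<tau>1 \<in> f" by (cases \<tau>1) auto
    moreover have "(VS 1 1, RootS \<tau>1) \<in> gam n G" using v1 \<tau>1 unfolding gam_def by force
    ultimately have "VS 1 1 \<in> f" using gam_face_iff[OF _ f] by blast
    thus ?thesis using v1 by (intro exI[of _ 1]) auto
  qed
qed

lemma face_has_wavy_slot: "f \<in> faces n G \<Longrightarrow> \<exists>v i. v \<in> wavy n G \<and> i \<in> {1..4} \<and> VS v i \<in> f"
proof -
  assume f: "f \<in> faces n G"
  then obtain v i where vi: "v \<in> verts n" "i \<in> {1..4}" "VS v i \<in> f" using face_has_VS by blast
  show ?thesis
  proof (cases "v \<in> wavy n G")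
    case False
    let ?u = "mate G v"
    have u: "?u \<in> wavy n G" "mate G ?u = v"
      using mate[OF vi(1)] False vi(1) unfolding wavy_def by auto
    obtain i' where i': "i' \<in> {1..4}" "cp (propg G ?u) i' = i"
      using cp_surj[OF propg_less[OF u(1)] vi(2)] by auto
    have "(VS ?u i', VS v i) \<in> gam n G" using u i' unfolding gam_def by force
    thus ?thesis using gam_face_iff[OF _ f] vi(3) u i' by blast
  qed (use vi in auto)
qed

lemma card_wavy: "2 * card (wavy n G) = n"
proof -
  let ?W = "wavy n G"
  have W: "v \<in> ?W \<longleftrightarrow> v \<in> verts n \<and> v < mate G v" for v by (simp add: wavy_def)
  have verts: "verts n = ?W \<union> mate G ` ?W"
  proof
    show "verts n \<subseteq> ?W \<union> mate G ` ?W"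
    proof
      fix v assume v: "v \<in> verts n"
      note m = mate[OF v]
      show "v \<in> ?W \<union> mate G ` ?W"
      proof (cases "v < mate G v")
        case False
        hence "mate G v \<in> ?W" using m W by simp
        hence "mate G (mate G v) \<in> mate G ` ?W" by (rule imageI)
        thus ?thesis using m by simp
      qed (use v W in simp)
    qed
    show "?W \<union> mate G ` ?W \<subseteq> verts n" using W mate by auto
  qed
  have disj: "?W \<inter> mate G ` ?W = {}"
  proof (rule ccontr)
    assume "?W \<inter> mate G ` ?W \<noteq> {}"
    then obtain x y where xy: "x \<in> ?W" "y \<in> ?W" "x = mate G y" by blast
    hence "mate G x = y" using mate[of y] W by simp
    thus False using W xy by (metis less_not_sym)
  qed
  have inj: "inj_on (mate G) ?W"
  proof (rule inj_onI)
    fix x y assume "x \<in> ?W" "y \<in> ?W" "mate G x = mate G y"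
    thus "x = y" using mate[of x] mate[of y] W by metis
  qed
  have "card (verts n) = card ?W + card (mate G ` ?W)"
    unfolding verts by (rule card_Un_disjoint) (use finite_wavy disj in auto)
  thus ?thesis using card_image[OF inj] by (simp add: verts_def)
qed

section \<open>Faces versus the rank of the incidence matrix\<close>

definition face_list :: "slot set list" where
  "face_list = (SOME fl. distinct fl \<and> set fl = faces n G)"

definition wavy_list :: "nat list" where
  "wavy_list = sorted_list_of_set (wavy n G)"

abbreviation nfaces :: nat where "nfaces \<equiv> length face_list"

lemma face_list: "distinct face_list" "set face_list = faces n G"
proof -
  have "\<exists>fl. distinct fl \<and> set fl = faces n G" using finite_distinct_list[OF finite_faces] by metis
  hence "distinct face_list \<and> set face_list = faces n G" unfolding face_list_def by (rule someI_ex)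
  thus "distinct face_list" "set face_list = faces n G" by auto
qed

lemma nfaces_eq: "nfaces = card (faces n G)"
  using face_list distinct_card by metis

lemma nth_face_list: "b < nfaces \<Longrightarrow> face_list ! b \<in> faces n G"
  using face_list(2) nth_mem by blast

lemma set_wavy_list: "set wavy_list = wavy n G"
  unfolding wavy_list_def using finite_wavy by auto

lemma nth_wavy_list: "a < length wavy_list \<Longrightarrow> wavy_list ! a \<in> wavy n G"
  using set_wavy_list nth_mem by blast

lemma Emat_eq: "Emat n G = mat (length wavy_list) nfaces (\<lambda>(a, b). Eent G (wavy_list ! a) (face_list ! b))"
  unfolding Emat_def Let_def wavy_list_def face_list_def by (rule refl)

lemma Emat_carrier: "Emat n G \<in> carrier_mat (length wavy_list) nfaces"
  unfolding Emat_eq by (rule mat_carrier)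

lemma Emat_index: "a < length wavy_list \<Longrightarrow> b < nfaces \<Longrightarrow>
    Emat n G $$ (a, b) = Eent G (wavy_list ! a) (face_list ! b)"
  unfolding Emat_eq by simp

lemma Rk_eq: "Rk n G = vec_space.rank (length wavy_list) (Emat n G)"
  unfolding Rk_def using carrier_matD(1)[OF Emat_carrier] by simp

definition wavy_slots :: "slot set" where
  "wavy_slots = (\<lambda>(v, i). VS v i) ` (wavy n G \<times> {1..4})"

definition private_faces :: "slot set set" where
  "private_faces = {f \<in> faces n G. card (f \<inter> wavy_slots) = 1}"

definition private_wavy :: "nat set" where
  "private_wavy = {v \<in> wavy n G. \<exists>f\<in>private_faces. \<exists>i\<in>{1..4}. VS v i \<in> f}"

lemma VS_in_wavy_slots: "v \<in> wavy n G \<Longrightarrow> i \<in> {1..4} \<Longrightarrow> VS v i \<in> wavy_slots"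
  unfolding wavy_slots_def by force

lemma finite_wavy_slots: "finite wavy_slots"
  unfolding wavy_slots_def using finite_wavy by auto

lemma card_wavy_slots: "card wavy_slots = 2 * n"
proof -
  have "inj_on (\<lambda>(v, i). VS v i) (wavy n G \<times> {1..4::nat})" by (auto simp: inj_on_def)
  hence "card wavy_slots = card (wavy n G \<times> {1..4::nat})" unfolding wavy_slots_def by (rule card_image)
  also have "\<dots> = 4 * card (wavy n G)" using finite_wavy by (simp add: card_cartesian_product)
  finally show ?thesis using card_wavy by simp
qed

lemma sum_card_faces_inter_wavy_slots: "(\<Sum>f\<in>faces n G. card (f \<inter> wavy_slots)) = 2 * n"
proof -
  have "wavy_slots \<subseteq> slots" using wavy_subset by (auto simp: wavy_slots_def all_slots_def)
  hence "(\<Union>f\<in>faces n G. f \<inter> wavy_slots) = wavy_slots" using slot_in_face by blast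
  moreover have "card (\<Union>f\<in>faces n G. f \<inter> wavy_slots) = (\<Sum>f\<in>faces n G. card (f \<inter> wavy_slots))"
    by (rule card_UN_disjoint) (use finite_faces finite_wavy_slots face_unique in auto)
  ultimately show ?thesis using card_wavy_slots by simp
qed

lemma face_inter_wavy_slots_nonempty: "f \<in> faces n G \<Longrightarrow> f \<inter> wavy_slots \<noteq> {}"
  using face_has_wavy_slot VS_in_wavy_slots by blast

text \<open>Each of the \<open>2n\<close> wavy slots lies in exactly one face, and every face that is not
  private contains at least two of them.\<close>

lemma card_faces_le_private_faces: "2 * card (faces n G) \<le> 2 * n + card private_faces"
proof -
  let ?c = "\<lambda>f. card (f \<inter> wavy_slots)"
  have sub: "private_faces \<subseteq> faces n G" unfolding private_faces_def by auto
  have two: "2 \<le> ?c f" if "f \<in> faces n G - private_faces" for f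
  proof -
    have "?c f \<noteq> 0" using that face_inter_wavy_slots_nonempty finite_wavy_slots by auto
    thus ?thesis using that unfolding private_faces_def by auto
  qed
  have "2 * n = (\<Sum>f\<in>private_faces. ?c f) + (\<Sum>f\<in>faces n G - private_faces. ?c f)"
    using sum.subset_diff[OF sub finite_faces, of ?c] sum_card_faces_inter_wavy_slots by simp
  also have "(\<Sum>f\<in>private_faces. ?c f) = card private_faces" unfolding private_faces_def by simp
  also have "(\<Sum>f\<in>faces n G - private_faces. ?c f) \<ge> 2 * card (faces n G - private_faces)"
    using sum_mono[of "faces n G - private_faces" "\<lambda>_. 2" ?c] two by simp
  moreover have "card (faces n G - private_faces) = card (faces n G) - card private_faces"
    using sub finite_faces by (simp add: card_Diff_subset finite_subset)
  moreover have "card private_faces \<le> card (faces n G)" using sub finite_faces card_mono by blast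
  ultimately show ?thesis by linarith
qed

lemma private_face_eq:
  assumes "f \<in> private_faces"
  obtains v i where "v \<in> wavy n G" "i \<in> {1..4}" "f \<inter> wavy_slots = {VS v i}"
proof -
  obtain s where s: "f \<inter> wavy_slots = {s}"
    using assms card_1_singletonE unfolding private_faces_def by blast
  hence "s \<in> wavy_slots" by blast
  then obtain v i where "v \<in> wavy n G" "i \<in> {1..4}" "s = VS v i"
    unfolding wavy_slots_def by auto
  thus ?thesis using that s by simp
qed

lemma card_private_faces_le: "card private_faces \<le> 4 * card private_wavy"
proof -
  define g where "g f = (SOME s. s \<in> f \<inter> wavy_slots)" for f
  have g: "g f \<in> f \<inter> wavy_slots" if "f \<in> private_faces" for f
    unfolding g_def by (rule someI_ex) (use that private_face_eq in blast)
  have inj: "inj_on g private_faces"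
  proof (rule inj_onI)
    fix f f' assume ff: "f \<in> private_faces" "f' \<in> private_faces" "g f = g f'"
    hence "g f \<in> f" "g f \<in> f'" using g[OF ff(1)] g[OF ff(2)] by auto
    thus "f = f'" using face_unique ff unfolding private_faces_def by blast
  qed
  have img: "g ` private_faces \<subseteq> (\<lambda>(v, i). VS v i) ` (private_wavy \<times> {1..4})"
  proof
    fix s assume "s \<in> g ` private_faces"
    then obtain f where f: "f \<in> private_faces" "s = g f" by blast
    hence "s \<in> wavy_slots" using g by blast
    then obtain v i where vi: "v \<in> wavy n G" "i \<in> {1..4}" "s = VS v i"
      unfolding wavy_slots_def by auto
    have "VS v i \<in> f" using g[OF f(1)] f(2) vi(3) by simp
    hence "v \<in> private_wavy" unfolding private_wavy_def using vi f(1) by blast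
    thus "s \<in> (\<lambda>(v, i). VS v i) ` (private_wavy \<times> {1..4})" using vi by force
  qed
  have fin: "finite private_wavy" unfolding private_wavy_def using finite_wavy by auto
  have "card private_faces = card (g ` private_faces)" using card_image[OF inj] by simp
  also have "\<dots> \<le> card ((\<lambda>(v, i). VS v i) ` (private_wavy \<times> {1..4::nat}))"
    by (rule card_mono[OF _ img]) (use fin in auto)
  also have "\<dots> \<le> card (private_wavy \<times> {1..4::nat})" by (rule card_image_le) (use fin in auto)
  also have "\<dots> = 4 * card private_wavy" using fin by (simp add: card_cartesian_product)
  finally show ?thesis .
qed

lemma Eent_private_face:
  assumes f: "f \<in> faces n G" and v: "v \<in> wavy n G" and i0: "i0 \<in> {1..4}"
    and fw: "f \<inter> wavy_slots = {VS v i0}" and u: "u \<in> wavy n G"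
  shows "Eent G u f = (if u = v then (if i0 \<le> 2 then 1 else -1) else 0)"
proof -
  have mem: "VS u i \<in> f \<longleftrightarrow> u = v \<and> i = i0" if "i \<in> {1..4}" for i
    using fw VS_in_wavy_slots[OF u that] by blast
  have "Eent G u f = (\<Sum>i\<in>{1..4::nat}. if u = v \<and> i = i0 then (if i \<le> 2 then 1 else -1) else 0)"
    unfolding Eent_def using mem by (intro sum.cong) auto
  also have "\<dots> = (if u = v then (if i0 \<le> 2 then 1 else -1) else 0)" using i0 by auto
  finally show ?thesis .
qed

lemma private_wavy_face:
  assumes v: "v \<in> private_wavy"
  shows "\<exists>f. f \<in> faces n G \<and> (\<exists>i\<in>{1..4}. f \<inter> wavy_slots = {VS v i})"
proof -
  obtain f i where f: "f \<in> private_faces" "i \<in> {1..4}" "VS v i \<in> f"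
    using v unfolding private_wavy_def by blast
  obtain u i' where u: "f \<inter> wavy_slots = {VS u i'}" using f(1) by (rule private_face_eq)
  have "VS v i \<in> f \<inter> wavy_slots" using f v VS_in_wavy_slots unfolding private_wavy_def by blast
  thus ?thesis using f u unfolding private_faces_def by auto
qed

lemma card_private_wavy_le_Rk: "card private_wavy \<le> Rk n G"
proof -
  define pf where "pf v = (SOME f. f \<in> faces n G \<and> (\<exists>i\<in>{1..4}. f \<inter> wavy_slots = {VS v i}))" for v
  define c where "c v = (SOME b. b < nfaces \<and> face_list ! b = pf v)" for v
  define ro where "ro v = (SOME a. a < length wavy_list \<and> wavy_list ! a = v)" for v
  have sub: "private_wavy \<subseteq> wavy n G" unfolding private_wavy_def by auto
  have pf: "pf v \<in> faces n G \<and> (\<exists>i\<in>{1..4}. pf v \<inter> wavy_slots = {VS v i})"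
    if "v \<in> private_wavy" for v
    unfolding pf_def by (rule someI_ex[OF private_wavy_face[OF that]])
  have c: "c v < nfaces \<and> face_list ! c v = pf v" if "v \<in> private_wavy" for v
  proof -
    have "pf v \<in> set face_list" using pf[OF that] face_list(2) by auto
    hence "\<exists>b. b < nfaces \<and> face_list ! b = pf v" by (metis in_set_conv_nth)
    thus ?thesis unfolding c_def by (rule someI_ex)
  qed
  have ro: "ro v < length wavy_list \<and> wavy_list ! ro v = v" if "v \<in> private_wavy" for v
  proof -
    have "v \<in> set wavy_list" using that sub set_wavy_list by auto
    hence "\<exists>a. a < length wavy_list \<and> wavy_list ! a = v" by (metis in_set_conv_nth)
    thus ?thesis unfolding ro_def by (rule someI_ex)
  qed
  have entry: "Emat n G $$ (ro u, c v) = 0 \<longleftrightarrow> u \<noteq> v"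
    if u: "u \<in> private_wavy" and v: "v \<in> private_wavy" for u v
  proof -
    obtain i0 where i0: "i0 \<in> {1..4}" "pf v \<inter> wavy_slots = {VS v i0}" using pf[OF v] by blast
    have "Emat n G $$ (ro u, c v) = Eent G u (pf v)" using Emat_index ro[OF u] c[OF v] by simp
    also have "\<dots> = (if u = v then (if i0 \<le> 2 then 1 else -1) else 0)"
      using pf[OF v] sub u v i0 by (intro Eent_private_face) auto
    finally show ?thesis by simp
  qed
  have "card private_wavy \<le> vec_space.rank (length wavy_list) (Emat n G)"
    by (rule vec_space.card_le_rank_if_diagonal_minor[OF Emat_carrier]) (use c ro entry in auto)
  thus ?thesis using Rk_eq by simp
qed

lemma card_faces_le: "2 * card (faces n G) \<le> 3 * n + 2 * Rk n G"
proof -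
  have "card private_wavy \<le> card (wavy n G)"
    unfolding private_wavy_def using finite_wavy by (intro card_mono) auto
  thus ?thesis
    using card_faces_le_private_faces card_private_faces_le card_private_wavy_le_Rk card_wavy
    by linarith
qed

section \<open>Momenta of admissible attributions\<close>

lemma admissible_outside: "admissible n r G (S, j, k) \<Longrightarrow> v \<notin> verts n \<Longrightarrow> S v = 0 \<and> j v = 0 \<and> k v = 0"
  and admissible_le: "admissible n r G (S, j, k) \<Longrightarrow> v \<in> verts n \<Longrightarrow> j v \<le> S v \<and> k v \<le> S v"
  and admissible_solid: "admissible n r G (S, j, k) \<Longrightarrow> v \<in> verts n \<Longrightarrow> j v = mom r (S, j, k) (pslot G v)"
  and admissible_dashed: "admissible n r G (S, j, k) \<Longrightarrow> s \<in> leaves n G \<Longrightarrow>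
      mom r (S, j, k) (dashed G s) = mom r (S, j, k) s"
  and admissible_wavy: "admissible n r G (S, j, k) \<Longrightarrow> v \<in> wavy n G \<Longrightarrow> S v = S (mate G v) \<and>
      propagator (propg G v) (S v) (j v) (k v) (S (mate G v)) (j (mate G v)) (k (mate G v))"
  unfolding admissible_def by auto

lemma gam_mom:
  assumes a: "admissible n r G (S, j, k)" and xy: "(x, y) \<in> gam n G"
  shows "mom r (S, j, k) x = mom r (S, j, k) y"
  using xy unfolding gam_def
proof (elim UnE)
  assume "(x, y) \<in> {(VS v i, VS (mate G v) (cp (propg G v) i)) |v i. v \<in> wavy n G \<and> i \<in> {1..4}}"
  then obtain v i where vi: "x = VS v i" "y = VS (mate G v) (cp (propg G v) i)" "v \<in> wavy n G" "i \<in> {1..4}"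
    by blast
  have v: "v \<in> verts n" using vi(3) wavy_subset by auto
  have "vertex_mom (S v) (j v) (k v) i = vertex_mom (S v) (j (mate G v)) (k (mate G v)) (cp (propg G v) i)"
    using admissible_wavy[OF a vi(3)] admissible_le[OF a v] admissible_le[OF a, of "mate G v"] mate[OF v]
    by (intro vertex_mom_cp[OF propg_less[OF vi(3)] vi(4)]) auto
  moreover have "S (mate G v) = S v" using admissible_wavy[OF a vi(3)] by simp
  ultimately show ?thesis by (simp only: vi(1,2) mom_VS)
qed (use admissible_solid[OF a] admissible_dashed[OF a] in auto)

lemma face_mom:
  assumes a: "admissible n r G (S, j, k)" and f: "f \<in> faces n G" and s: "s \<in> f" "s' \<in> f"
  shows "mom r (S, j, k) s = mom r (S, j, k) s'"
proof -
  have "(s, s') \<in> (gam n G \<union> (gam n G)\<inverse>)\<^sup>*" using face_eq[OF f s(1)] s(2) by (auto simp: face_rel_def)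
  thus ?thesis
    by (induction rule: rtrancl_induct) (use gam_mom[OF a] in fastforce)+
qed

definition weight :: "nat \<Rightarrow> attribution \<Rightarrow> nat" where
  "weight r a = (\<Sum>s\<in>leaves n G. mom r a s)"

lemma sum_mom_child_slots:
  assumes a: "admissible n r G (S, j, k)"
  shows "(\<Sum>s\<in>child_slots n. mom r (S, j, k) s) = 2 * r + (\<Sum>v\<in>verts n. 2 * (S v - j v) + j v)"
proof -
  let ?m = "mom r (S, j, k)"
  let ?V = "verts n"
  have C: "child_slots n = {RootS TA, RootS TB} \<union> (\<lambda>(v, c). VS v c) ` (?V \<times> {2..4})"
    by (auto simp: child_slots_def UNIV_ty)
  have inj: "inj_on (\<lambda>(v, c). VS v c) (?V \<times> {2..4::nat})" by (auto simp: inj_on_def)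
  have "sum ?m (child_slots n) = 2 * r + sum ?m ((\<lambda>(v, c). VS v c) ` (?V \<times> {2..4}))"
    unfolding C by (subst sum.union_disjoint) (auto simp: verts_def)
  also have "sum ?m ((\<lambda>(v, c). VS v c) ` (?V \<times> {2..4})) = (\<Sum>(v, c)\<in>?V \<times> {2..4}. ?m (VS v c))"
    by (subst sum.reindex[OF inj]) (simp add: case_prod_unfold)
  also have "\<dots> = (\<Sum>v\<in>?V. \<Sum>c\<in>{2..4}. ?m (VS v c))"
    by (rule sum.cartesian_product[symmetric])
  also have "\<dots> = (\<Sum>v\<in>?V. 2 * (S v - j v) + j v)"
  proof (rule sum.cong[OF refl])
    fix v assume "v \<in> ?V"
    hence "j v \<le> S v" "k v \<le> S v" using admissible_le[OF a] by auto
    moreover have "{2..4::nat} = {2, 3, 4}" by auto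
    ultimately show "(\<Sum>c\<in>{2..4}. ?m (VS v c)) = 2 * (S v - j v) + j v" by simp
  qed
  finally show ?thesis .
qed

text \<open>Dashed edges match leaves with anti-leaves of equal momentum.\<close>

lemma sum_mom_leaf_slots:
  assumes a: "admissible n r G (S, j, k)"
  shows "(\<Sum>s\<in>leaf_slots n G. mom r (S, j, k) s) = 2 * weight r (S, j, k)"
proof -
  let ?m = "mom r (S, j, k)"
  have split: "leaf_slots n G = leaves n G \<union> antileaves n G"
    unfolding leaf_slots_def leaves_def antileaves_def using ty.exhaust by auto
  have "finite (leaf_slots n G)"
    unfolding leaf_slots_def using finite_slots child_slots_subset finite_subset by blast
  hence fin: "finite (leaves n G)" "finite (antileaves n G)" unfolding split by auto
  have disj: "leaves n G \<inter> antileaves n G = {}" unfolding leaves_def antileaves_def by auto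
  have "sum ?m (leaf_slots n G) = sum ?m (leaves n G) + sum ?m (antileaves n G)"
    unfolding split by (rule sum.union_disjoint[OF fin disj])
  also have "sum ?m (antileaves n G) = (\<Sum>s\<in>leaves n G. ?m (dashed G s))"
    by (rule sum.reindex_bij_betw[OF dashed_bij, symmetric])
  also have "\<dots> = sum ?m (leaves n G)" using admissible_dashed[OF a] by simp
  finally show ?thesis unfolding weight_def by simp
qed

text \<open>The child slots are the parent slots of the true vertices, carrying \<open>j\<close>, and the leaf slots.\<close>

lemma weight_eq:
  assumes a: "admissible n r G (S, j, k)"
  shows "weight r (S, j, k) = r + (\<Sum>v\<in>verts n. S v - j v)"
proof -
  let ?m = "mom r (S, j, k)"
  have sub: "pslot G ` verts n \<subseteq> child_slots n" using pslot_in_child_slots by auto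
  have fin: "finite (child_slots n)" using finite_slots child_slots_subset finite_subset by blast
  have "sum ?m (child_slots n) = sum ?m (leaf_slots n G) + sum ?m (pslot G ` verts n)"
    unfolding leaf_slots_def by (rule sum.subset_diff[OF sub fin])
  also have "sum ?m (pslot G ` verts n) = (\<Sum>v\<in>verts n. j v)"
    by (subst sum.reindex[OF inj_pslot]) (use admissible_solid[OF a] in simp)
  finally show ?thesis
    using sum_mom_child_slots[OF a] sum_mom_leaf_slots[OF a] by (simp add: sum.distrib flip: sum_distrib_left)
qed

text \<open>Induction towards the root: \<open>S\<^sub>v = j\<^sub>v + (S\<^sub>v - j\<^sub>v)\<close>, and \<open>j\<^sub>v\<close> is the momentum of a slot
  of the parent \<open>u < v\<close>, hence at most \<open>S\<^sub>u\<close>.\<close>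

lemma S_le_weight_partial:
  assumes a: "admissible n r G (S, j, k)" and v: "v \<in> verts n"
  shows "S v \<le> r + (\<Sum>u\<in>{1..v}. S u - j u)"
  using v
proof (induction v rule: less_induct)
  case (less v)
  have le: "j v \<le> S v" using admissible_le[OF a less(2)] by simp
  have mem: "S v - j v \<le> (\<Sum>u\<in>{1..v}. S u - j u)"
    using less(2) by (intro member_le_sum) (auto simp: verts_def)
  from less(2) show ?case
  proof (cases rule: pslot_cases)
    case (1 \<tau>)
    hence "j v = r" using admissible_solid[OF a less(2)] by simp
    thus ?thesis using mem le by linarith
  next
    case (2 u c)
    have "j v = vertex_mom (S u) (j u) (k u) c" using admissible_solid[OF a less(2)] by (simp only: 2(1) mom_VS)
    also have "\<dots> \<le> S u" using admissible_le[OF a 2(2)] by (intro vertex_mom_le) auto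
    also have "\<dots> \<le> r + (\<Sum>w\<in>{1..u}. S w - j w)" by (rule less.IH[OF 2(3,2)])
    finally have jv: "j v \<le> r + (\<Sum>w\<in>{1..u}. S w - j w)" .
    have "(\<Sum>w\<in>{1..u}. S w - j w) + (S v - j v) = (\<Sum>w\<in>insert v {1..u}. S w - j w)"
      using 2(3) by simp
    also have "\<dots> \<le> (\<Sum>w\<in>{1..v}. S w - j w)"
      using 2(2,3) less(2) by (intro sum_mono2) (auto simp: verts_def)
    finally show ?thesis using jv le by linarith
  qed
qed

lemma mom_le_weight:
  assumes a: "admissible n r G (S, j, k)" and s: "s \<in> slots"
  shows "mom r (S, j, k) s \<le> weight r (S, j, k)"
proof (cases s)
  case (VS v i)
  hence v: "v \<in> verts n" using s by (auto simp: all_slots_def)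
  have "(\<Sum>u\<in>{1..v}. S u - j u) \<le> (\<Sum>u\<in>verts n. S u - j u)"
    using v by (intro sum_mono2) (auto simp: verts_def)
  hence "S v \<le> weight r (S, j, k)" using S_le_weight_partial[OF a v] weight_eq[OF a] by linarith
  moreover have "mom r (S, j, k) s = vertex_mom (S v) (j v) (k v) i" by (simp only: VS mom_VS)
  hence "mom r (S, j, k) s \<le> S v" using admissible_le[OF a v] by (simp add: vertex_mom_le)
  ultimately show ?thesis by linarith
qed (use weight_eq[OF a] in simp)

lemma admissible_eq_if_mom_eq:
  assumes a: "admissible n r G (S, j, k)" and a': "admissible n r G (S', j', k')"
    and eq: "\<And>s. s \<in> slots \<Longrightarrow> mom r (S, j, k) s = mom r (S', j', k') s"
  shows "(S, j, k) = (S', j', k')"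
proof -
  have "S v = S' v \<and> j v = j' v \<and> k v = k' v" for v
  proof (cases "v \<in> verts n")
    case True
    have "VS v i \<in> slots" if "i \<in> {1..4}" for i using True that by (auto simp: all_slots_def)
    hence "j v = j' v" "S v - j v = S' v - j' v" "k v = k' v"
      using eq[of "VS v 1"] eq[of "VS v 2"] eq[of "VS v 3"] by (auto simp: mom_VS vertex_mom_def)
    thus ?thesis using admissible_le[OF a True] admissible_le[OF a' True] by auto
  qed (use admissible_outside[OF a] admissible_outside[OF a'] in simp)
  thus ?thesis by auto
qed

section \<open>The face momentum vector\<close>

lemma ex1_face_index: "s \<in> slots \<Longrightarrow> \<exists>!b. b < nfaces \<and> s \<in> face_list ! b"
proof -
  assume s: "s \<in> slots"
  obtain f where f: "f \<in> faces n G" "s \<in> f" using slot_in_face[OF s] by blast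
  then obtain b where b: "b < nfaces" "face_list ! b = f" using face_list(2) by (metis in_set_conv_nth)
  show ?thesis
  proof (rule ex1I[of _ b])
    fix b' assume b': "b' < nfaces \<and> s \<in> face_list ! b'"
    hence "face_list ! b' = face_list ! b" using face_unique nth_face_list b f by metis
    thus "b' = b" using nth_eq_iff_index_eq[OF face_list(1)] b b' by blast
  qed (use b f in simp)
qed

definition face_index :: "slot \<Rightarrow> nat" where
  "face_index s = (THE b. b < nfaces \<and> s \<in> face_list ! b)"

lemma face_index: "s \<in> slots \<Longrightarrow> face_index s < nfaces \<and> s \<in> face_list ! face_index s"
  unfolding face_index_def by (rule theI'[OF ex1_face_index])

lemma face_index_unique: "s \<in> slots \<Longrightarrow> b < nfaces \<Longrightarrow> s \<in> face_list ! b \<Longrightarrow> face_index s = b"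
  unfolding face_index_def by (rule the1_equality[OF ex1_face_index]) auto

lemma sum_face_list_mem:
  assumes s: "s \<in> slots"
  shows "(\<Sum>b<nfaces. if s \<in> face_list ! b then g b else 0) = g (face_index s)"
proof -
  have "(\<Sum>b<nfaces. if s \<in> face_list ! b then g b else 0) = (\<Sum>b<nfaces. if b = face_index s then g b else 0)"
  proof (rule sum.cong[OF refl])
    fix b assume b: "b \<in> {..<nfaces}"
    show "(if s \<in> face_list ! b then g b else 0) = (if b = face_index s then g b else 0)"
    proof (cases "s \<in> face_list ! b")
      case True
      thus ?thesis using face_index_unique[OF s _ True] b by simp
    next
      case False
      hence "b \<noteq> face_index s" using face_index[OF s] by blast
      thus ?thesis using False by simp
    qed
  qed
  also have "\<dots> = g (face_index s)" using face_index[OF s] by simp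
  finally show ?thesis .
qed

definition face_rep :: "slot set \<Rightarrow> slot" where
  "face_rep f = (SOME s. s \<in> f)"

lemma face_rep: "b < nfaces \<Longrightarrow> face_rep (face_list ! b) \<in> face_list ! b \<and> face_rep (face_list ! b) \<in> slots"
  using face_nonempty[OF nth_face_list] face_subset[OF nth_face_list] unfolding face_rep_def
  by (metis all_not_in_conv someI_ex subsetD)

definition face_mom_vec :: "nat \<Rightarrow> attribution \<Rightarrow> real vec" where
  "face_mom_vec r a = vec nfaces (\<lambda>b. real (mom r a (face_rep (face_list ! b))))"

lemma face_mom_vec_carrier: "face_mom_vec r a \<in> carrier_vec nfaces"
  unfolding face_mom_vec_def by simp

lemma face_mom_vec_face_index:
  assumes a: "admissible n r G (S, j, k)" and s: "s \<in> slots"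
  shows "face_mom_vec r (S, j, k) $ face_index s = real (mom r (S, j, k) s)"
proof -
  have b: "face_index s < nfaces" "s \<in> face_list ! face_index s" using face_index[OF s] by auto
  have "mom r (S, j, k) (face_rep (face_list ! face_index s)) = mom r (S, j, k) s"
    using face_rep[OF b(1)] b(2) by (intro face_mom[OF a nth_face_list[OF b(1)]]) auto
  thus ?thesis unfolding face_mom_vec_def using b by simp
qed

definition corner_sign :: "nat \<Rightarrow> real" where
  "corner_sign i = (if i \<le> 2 then 1 else -1)"

lemma sum_1_to_4: "(\<Sum>i\<in>{1..4::nat}. g i) = g 1 + g 2 + g 3 + (g 4 :: real)"
proof -
  have "{1..4::nat} = {1, 2, 3, 4}" by auto
  thus ?thesis by simp
qed

lemma Emat_row_mult:
  assumes a: "a < length wavy_list"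
  shows "(\<Sum>b<nfaces. Emat n G $$ (a, b) * x b)
    = (\<Sum>i\<in>{1..4}. corner_sign i * x (face_index (VS (wavy_list ! a) i)))"
proof -
  let ?v = "wavy_list ! a"
  have slot: "VS ?v i \<in> slots" if "i \<in> {1..4}" for i
    using nth_wavy_list[OF a] wavy_subset that by (auto simp: all_slots_def)
  have "(\<Sum>b<nfaces. Emat n G $$ (a, b) * x b)
      = (\<Sum>b<nfaces. \<Sum>i\<in>{1..4}. if VS ?v i \<in> face_list ! b then corner_sign i * x b else 0)"
    using a by (intro sum.cong) (auto simp: Emat_index Eent_def corner_sign_def sum_distrib_right
        intro!: sum.cong)
  also have "\<dots> = (\<Sum>i\<in>{1..4}. \<Sum>b<nfaces. if VS ?v i \<in> face_list ! b then corner_sign i * x b else 0)"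
    by (rule sum.swap)
  also have "\<dots> = (\<Sum>i\<in>{1..4}. corner_sign i * x (face_index (VS ?v i)))"
  proof (rule sum.cong[OF refl])
    fix i assume "i \<in> {1..4::nat}"
    from sum_face_list_mem[OF slot[OF this], of "\<lambda>b. corner_sign i * x b"]
    show "(\<Sum>b<nfaces. if VS ?v i \<in> face_list ! b then corner_sign i * x b else 0)
      = corner_sign i * x (face_index (VS ?v i))" .
  qed
  finally show ?thesis .
qed

lemma Emat_row_sum:
  assumes "a < length wavy_list"
  shows "(\<Sum>b<nfaces. Emat n G $$ (a, b)) = 0"
proof -
  have "(\<Sum>b<nfaces. Emat n G $$ (a, b)) = (\<Sum>i\<in>{1..4}. corner_sign i)"
    using Emat_row_mult[OF assms, of "\<lambda>_. 1"] by simp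
  also have "\<dots> = 0" by (simp only: sum_1_to_4) (simp add: corner_sign_def)
  finally show ?thesis .
qed

lemma Emat_mult_face_mom_vec:
  assumes adm: "admissible n r G (S, j, k)"
  shows "Emat n G *\<^sub>v face_mom_vec r (S, j, k) = 0\<^sub>v (length wavy_list)"
proof (rule eq_vecI)
  fix a assume "a < dim_vec (0\<^sub>v (length wavy_list) :: real vec)"
  hence a: "a < length wavy_list" by simp
  let ?v = "wavy_list ! a"
  let ?x = "face_mom_vec r (S, j, k)"
  have v: "?v \<in> verts n" using nth_wavy_list[OF a] wavy_subset by auto
  have slot: "VS ?v i \<in> slots" if "i \<in> {1..4}" for i using v that by (auto simp: all_slots_def)
  have "(Emat n G *\<^sub>v ?x) $ a = (\<Sum>b<nfaces. Emat n G $$ (a, b) * ?x $ b)"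
    using Emat_carrier a face_mom_vec_carrier[of r "(S, j, k)"]
    by (auto simp: scalar_prod_def atLeast0LessThan intro!: sum.cong)
  also have "\<dots> = (\<Sum>i\<in>{1..4}. corner_sign i * ?x $ face_index (VS ?v i))"
    by (rule Emat_row_mult[OF a])
  also have "\<dots> = (\<Sum>i\<in>{1..4}. corner_sign i * real (vertex_mom (S ?v) (j ?v) (k ?v) i))"
  proof (rule sum.cong[OF refl])
    fix i assume "i \<in> {1..4::nat}"
    from face_mom_vec_face_index[OF adm slot[OF this]]
    show "corner_sign i * ?x $ face_index (VS ?v i) = corner_sign i * real (vertex_mom (S ?v) (j ?v) (k ?v) i)"
      by (simp only: mom_VS)
  qed
  also have "\<dots> = 0"
    using admissible_le[OF adm v]
    by (simp only: sum_1_to_4) (simp add: corner_sign_def vertex_mom_def of_nat_diff)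
  finally show "(Emat n G *\<^sub>v ?x) $ a = 0\<^sub>v (length wavy_list) $ a" using a by simp
qed (use Emat_carrier in simp)

section \<open>Bounding the amplitude\<close>

definition root_face :: nat where
  "root_face = face_index (RootS TA)"

lemma root_face: "root_face < nfaces" "RootS TA \<in> face_list ! root_face"
  using face_index[of "RootS TA"] unfolding root_face_def by (auto simp: all_slots_def)

lemma obtain_free_faces:
  obtains J where "J \<subseteq> {..<nfaces}" "root_face \<notin> J" "card J + Rk n G + 1 = nfaces"
    "\<And>y. y \<in> carrier_vec nfaces \<Longrightarrow> Emat n G *\<^sub>v y = 0\<^sub>v (length wavy_list) \<Longrightarrow>
       y $ root_face = 0 \<Longrightarrow> (\<And>b. b \<in> J \<Longrightarrow> y $ b = 0) \<Longrightarrow> y = 0\<^sub>v nfaces"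
proof -
  obtain K where K: "K \<subseteq> {..<nfaces} - {root_face}" "card K = Rk n G"
    "\<And>y. y \<in> carrier_vec nfaces \<Longrightarrow> Emat n G *\<^sub>v y = 0\<^sub>v (length wavy_list) \<Longrightarrow>
       (\<And>b. b < nfaces \<Longrightarrow> b \<notin> K \<Longrightarrow> y $ b = 0) \<Longrightarrow> y = 0\<^sub>v nfaces"
    using vec_space.obtain_kernel_detecting_cols_avoiding[OF Emat_carrier root_face(1) Emat_row_sum] Rk_eq
    by metis
  define J where "J = {..<nfaces} - insert root_face K"
  have sub: "insert root_face K \<subseteq> {..<nfaces}" using K(1) root_face(1) by auto
  have "finite K" "root_face \<notin> K" using K(1) finite_subset[of K "{..<nfaces}"] by auto
  hence "card (insert root_face K) = Rk n G + 1" using K(2) by simp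
  hence card: "card J + Rk n G + 1 = nfaces"
    unfolding J_def using card_Diff_subset[OF finite_subset[OF sub] sub] card_mono[OF _ sub] by simp
  have ker: "y = 0\<^sub>v nfaces"
    if "y \<in> carrier_vec nfaces" "Emat n G *\<^sub>v y = 0\<^sub>v (length wavy_list)"
      "y $ root_face = 0" "\<And>b. b \<in> J \<Longrightarrow> y $ b = 0" for y
  proof (rule K(3)[OF that(1,2)])
    fix b assume "b < nfaces" "b \<notin> K"
    thus "y $ b = 0" using that(3,4) unfolding J_def by (cases "b = root_face") auto
  qed
  show ?thesis by (rule that[OF _ _ card ker]) (auto simp: J_def)
qed

text \<open>Two admissible attributions with the same momenta on the free faces have the
  same face momentum vector, because their difference lies in the kernel of \<open>E\<close> and
  vanishes on the root face (momentum \<open>r\<close>) and on the free faces.\<close>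

lemma inj_on_free_face_mom:
  assumes J: "J \<subseteq> {..<nfaces}"
    and ker: "\<And>y. y \<in> carrier_vec nfaces \<Longrightarrow> Emat n G *\<^sub>v y = 0\<^sub>v (length wavy_list) \<Longrightarrow>
       y $ root_face = 0 \<Longrightarrow> (\<And>b. b \<in> J \<Longrightarrow> y $ b = 0) \<Longrightarrow> y = 0\<^sub>v nfaces"
  shows "inj_on (\<lambda>a. restrict (\<lambda>b. mom r a (face_rep (face_list ! b))) J) {a. admissible n r G a}"
proof (rule inj_onI)
  fix a a' assume a: "a \<in> {a. admissible n r G a}" and a': "a' \<in> {a. admissible n r G a}"
    and eq: "restrict (\<lambda>b. mom r a (face_rep (face_list ! b))) J
      = restrict (\<lambda>b. mom r a' (face_rep (face_list ! b))) J"
  obtain S j k S' j' k' where aa: "a = (S, j, k)" "a' = (S', j', k')" by (cases a, cases a')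
  have adm: "admissible n r G (S, j, k)" and adm': "admissible n r G (S', j', k')" using a a' aa by auto
  let ?x = "face_mom_vec r (S, j, k)" and ?x' = "face_mom_vec r (S', j', k')"
  have idx: "(?x - ?x') $ b = ?x $ b - ?x' $ b" if "b < nfaces" for b
    using that by (simp add: face_mom_vec_def)
  have "?x - ?x' = 0\<^sub>v nfaces"
  proof (rule ker)
    show "?x - ?x' \<in> carrier_vec nfaces" using face_mom_vec_carrier by auto
    show "Emat n G *\<^sub>v (?x - ?x') = 0\<^sub>v (length wavy_list)"
      using mult_minus_distrib_mat_vec[OF Emat_carrier face_mom_vec_carrier face_mom_vec_carrier]
        Emat_mult_face_mom_vec[OF adm] Emat_mult_face_mom_vec[OF adm'] by simp
    show "(?x - ?x') $ root_face = 0"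
      using idx[OF root_face(1)] face_mom_vec_face_index[OF adm, of "RootS TA"]
        face_mom_vec_face_index[OF adm', of "RootS TA"]
      by (simp add: root_face_def all_slots_def)
    show "(?x - ?x') $ b = 0" if "b \<in> J" for b
      using idx fun_cong[OF eq, of b] that J by (auto simp: face_mom_vec_def aa)
  qed
  hence "real (mom r (S, j, k) s) = real (mom r (S', j', k') s)" if "s \<in> slots" for s
    using face_index[OF that] idx face_mom_vec_face_index[OF adm that] face_mom_vec_face_index[OF adm' that]
    by (metis eq_iff_diff_eq_0 index_zero_vec(1))
  thus "a = a'" unfolding aa by (intro admissible_eq_if_mom_eq[OF adm adm']) simp
qed

lemma prod_leaves_le_free_face_mom:
  assumes p: "0 < p" "p < 1" and J: "J \<subseteq> {..<nfaces}" "card J + 1 \<le> c"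
    and adm: "admissible n r G a"
  shows "(\<Prod>s\<in>leaves n G. ennreal (p ^ mom r a s))
    \<le> ennreal (p powr (real r / real c) * (\<Prod>b\<in>J. (p powr (1 / real c)) ^ mom r a (face_rep (face_list ! b))))"
proof -
  obtain S j k where a: "a = (S, j, k)" by (cases a)
  have "finite J" using J(1) finite_subset by blast
  hence "p ^ weight r a
      \<le> p powr (real r / real c) * (\<Prod>b\<in>J. (p powr (1 / real c)) ^ mom r a (face_rep (face_list ! b)))"
    using weight_eq mom_le_weight face_rep J(1) adm unfolding a
    by (intro power_le_powr_mult_prod[OF p _ J(2)]) auto
  thus ?thesis using p unfolding weight_def by (simp add: prod_ennreal power_sum ennreal_leI)
qed

theorem amp_le:
  assumes p: "0 < p" "p < 1"
  shows "amp p n r G \<le> ennreal (real (4 * n) ^ (3 * n div 2 - 1) * p powr (real r / real (4 * n))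
    * Nc p powr (- real_of_int (deg n G)))"
proof -
  obtain J where J: "J \<subseteq> {..<nfaces}" "root_face \<notin> J" "card J + Rk n G + 1 = nfaces"
    "\<And>y. y \<in> carrier_vec nfaces \<Longrightarrow> Emat n G *\<^sub>v y = 0\<^sub>v (length wavy_list) \<Longrightarrow>
       y $ root_face = 0 \<Longrightarrow> (\<And>b. b \<in> J \<Longrightarrow> y $ b = 0) \<Longrightarrow> y = 0\<^sub>v nfaces"
    using obtain_free_faces by blast
  define c where "c = 4 * n"
  define \<psi> where "\<psi> a = restrict (\<lambda>b. mom r a (face_rep (face_list ! b))) J" for a
  have finJ: "finite J" using J(1) finite_subset by blast
  have D: "2 * card J + 2 \<le> 3 * n" using card_faces_le J(3) nfaces_eq by linarith
  hence c: "card J + 1 \<le> c" "1 \<le> c" using two_le unfolding c_def by linarith+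
  have term_le: "(\<Prod>s\<in>leaves n G. ennreal (p ^ mom r a s))
      \<le> ennreal (p powr (real r / real c) * (\<Prod>b\<in>J. (p powr (1 / real c)) ^ \<psi> a b))"
    if "a \<in> {a. admissible n r G a}" for a
  proof -
    have "(\<Prod>b\<in>J. (p powr (1 / real c)) ^ \<psi> a b)
        = (\<Prod>b\<in>J. (p powr (1 / real c)) ^ mom r a (face_rep (face_list ! b)))"
      unfolding \<psi>_def by (intro prod.cong) auto
    thus ?thesis using prod_leaves_le_free_face_mom[OF p J(1) c(1)] that by simp
  qed
  have inj: "inj_on \<psi> {a. admissible n r G a}"
    unfolding \<psi>_def by (rule inj_on_free_face_mom[OF J(1) J(4)])
  have "(\<Sum>\<^sub>\<infinity>a\<in>{a. admissible n r G a}. \<Prod>s\<in>leaves n G. ennreal (p ^ mom r a s))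
      \<le> ennreal (p powr (real r / real c) * (1 / (1 - p powr (1 / real c))) ^ card J)"
    using powr_inverse_nat_bounds[OF p c(2)]
    by (intro infsum_le_geometric_if_inj[OF _ _ _ finJ inj _ term_le])
      (auto simp: \<psi>_def simp del: restrict_apply)
  hence "amp p n r G \<le> ennreal (inverse (Nc p ^ n))
      * ennreal (p powr (real r / real c) * (1 / (1 - p powr (1 / real c))) ^ card J)"
    unfolding amp_def by (rule mult_left_mono) simp
  also have "\<dots> = ennreal (inverse (Nc p ^ n)
      * (p powr (real r / real c) * (1 / (1 - p powr (1 / real c))) ^ card J))"
    using p powr_inverse_nat_bounds(2)[OF p c(2)] by (intro ennreal_mult[symmetric]) (auto simp: Nc_def)
  also have "\<dots> \<le> ennreal (real c ^ (3 * n div 2 - 1) * p powr (real r / real c)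
      * Nc p powr (real (card J) - real n))"
    using D by (intro ennreal_leI inverse_Nc_power_mult_le[OF p c(2)]) presburger
  also have "real (card J) - real n = - real_of_int (deg n G)"
    using J(3) nfaces_eq unfolding deg_def by simp
  finally show ?thesis unfolding c_def .
qed

end

theorem proposition2:
  fixes n r :: nat and p :: real and G :: graph
  assumes "even n" and "n \<ge> 2" and "0 < p" and "p < 1" and "is_graph n G"
  shows "amp p n r G \<le> ennreal (real (4 * n) ^ (3 * n div 2 - 1) * p powr (real r / real (4 * n))
                                  * Nc p powr (- real_of_int (deg n G)))"
proof -
  interpret graph_of_order n G using assms(2,5) by unfold_locales
  show ?thesis by (rule amp_le[OF assms(3,4)])
qed

end
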